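(* Every finite simple graph possesses an admissible ordering of its edges.
   Context: An admissible edge ordering of a graph $G$ is a total order $\succ$ on $E(G)$ such that for any edges $\{a,b\},\{c,d\}$ with $\{a,b\}\cap\{c,d\}=\emptyset$ and $\{a,b\}\succ\{c,d\}$, either all edges incident to $a$ are larger than $\{c,d\}$ or all edges incident to $b$ are larger than $\{c,d\}$. *)

theory Defs
  imports Main
begin

definition simple_graph :: "'a set \<Rightarrow> 'a set set \<Rightarrow> bool" where
  "simple_graph V E \<longleftrightarrow> finite V \<and> (\<forall>e\<in>E. e \<subseteq> V \<and> card e = 2)"

(* An edge ordering is a strict total order on E, given as a relation r where
   (f, e) \<in> r means  e \<succ> f  (e is larger than f). *)
definition admissible_edge_ordering :: "'a set set \<Rightarrow> ('a set \<times> 'a set) set \<Rightarrow> bool" where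
  "admissible_edge_ordering E r \<longleftrightarrow>
     strict_linear_order_on E r \<and> r \<subseteq> E \<times> E \<and>
     (\<forall>a b c d. {a, b} \<in> E \<longrightarrow> {c, d} \<in> E \<longrightarrow> {a, b} \<inter> {c, d} = {} \<longrightarrow>
        ({c, d}, {a, b}) \<in> r \<longrightarrow>
        (\<forall>e\<in>E. a \<in> e \<longrightarrow> ({c, d}, e) \<in> r) \<or>
        (\<forall>e\<in>E. b \<in> e \<longrightarrow> ({c, d}, e) \<in> r))"

end

theory Submission
  imports Defs "HOL-Library.Product_Lexorder"
begin

text \<open>Number the vertices injectively and call an edge larger the smaller the number of its
lower endpoint, breaking ties by the upper endpoint. If \<open>{a, b} \<succ> {c, d}\<close> are disjoint, the
lower endpoint \<open>x\<close> of \<open>{a, b}\<close> has a number strictly below both numbers of \<open>{c, d}\<close>; every edge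
through \<open>x\<close> has lower endpoint numbered at most that of \<open>x\<close> and is therefore larger than \<open>{c, d}\<close>.\<close>

definition min_rank :: "('a \<Rightarrow> 'b::linorder) \<Rightarrow> 'a set \<Rightarrow> 'b" where
  "min_rank f e = Min (f ` e)"

definition max_rank :: "('a \<Rightarrow> 'b::linorder) \<Rightarrow> 'a set \<Rightarrow> 'b" where
  "max_rank f e = Max (f ` e)"

definition rank_edge_order :: "('a \<Rightarrow> 'b::linorder) \<Rightarrow> 'a set set \<Rightarrow> ('a set \<times> 'a set) set" where
  "rank_edge_order f E =
     {(g, e). g \<in> E \<and> e \<in> E \<and> (min_rank f e, max_rank f e) < (min_rank f g, max_rank f g)}"

lemma strict_linear_order_on_reverse_key:
  fixes key :: "'a \<Rightarrow> 'b::linorder"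
  assumes "inj_on key A"
  shows "strict_linear_order_on A {(y, x). y \<in> A \<and> x \<in> A \<and> key x < key y}"
  unfolding strict_linear_order_on_def trans_def irrefl_def total_on_def
  using assms by (auto simp: inj_on_def) (meson linorder_neqE)

lemma image_card_two_eq_Min_Max:
  fixes f :: "'a \<Rightarrow> 'b::linorder"
  assumes "card e = 2"
  shows "f ` e = {Min (f ` e), Max (f ` e)}"
proof -
  obtain x y where "e = {x, y}"
    using assms by (auto simp: card_2_iff)
  then show ?thesis
    by (auto simp: min_def max_def)
qed

lemma inj_on_rank_pair:
  assumes "inj_on f V" and "\<And>e. e \<in> E \<Longrightarrow> e \<subseteq> V \<and> card e = 2"
  shows "inj_on (\<lambda>e. (min_rank f e, max_rank f e)) E"
proof (rule inj_onI)
  fix e g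
  assume "e \<in> E" "g \<in> E" and "(min_rank f e, max_rank f e) = (min_rank f g, max_rank f g)"
  then have "f ` e = f ` g"
    using assms(2) image_card_two_eq_Min_Max[of _ f] by (metis min_rank_def max_rank_def prod.inject)
  then show "e = g"
    using assms \<open>e \<in> E\<close> \<open>g \<in> E\<close> by (meson inj_on_image_eq_iff)
qed

lemma min_rank_attained:
  assumes "finite e" "e \<noteq> {}"
  obtains x where "x \<in> e" "min_rank f e = f x"
proof -
  have "Min (f ` e) \<in> f ` e"
    using assms by simp
  then show ?thesis
    using that unfolding min_rank_def by blast
qed

lemma min_rank_le:
  assumes "finite e" "x \<in> e"
  shows "min_rank f e \<le> f x"
  using assms unfolding min_rank_def by simp

lemma min_rank_less_if_disjoint_larger:
  assumes "inj_on f V" "e \<subseteq> V" "g \<subseteq> V" "finite e" "e \<noteq> {}" "finite g" "g \<noteq> {}"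
    and "e \<inter> g = {}" and "(g, e) \<in> rank_edge_order f E"
  shows "min_rank f e < min_rank f g"
proof -
  obtain x where x: "x \<in> e" "min_rank f e = f x"
    using assms(4,5) by (rule min_rank_attained)
  obtain y where y: "y \<in> g" "min_rank f g = f y"
    using assms(6,7) by (rule min_rank_attained)
  have "x \<noteq> y"
    using x y \<open>e \<inter> g = {}\<close> by auto
  then have "min_rank f e \<noteq> min_rank f g"
    using x y assms(1-3) by (auto simp: inj_on_def)
  then show ?thesis
    using assms(9) unfolding rank_edge_order_def by auto
qed

lemma admissible_rank_edge_order:
  assumes "simple_graph V E" and "inj_on f V"
  shows "admissible_edge_ordering E (rank_edge_order f E)"
proof -
  have edge: "e \<subseteq> V" "card e = 2" "finite e" "e \<noteq> {}" if "e \<in> E" for e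
    using assms(1) that unfolding simple_graph_def by (auto intro: card_ge_0_finite)
  have "strict_linear_order_on E (rank_edge_order f E)"
    unfolding rank_edge_order_def
    by (rule strict_linear_order_on_reverse_key, rule inj_on_rank_pair) (use assms(2) edge in auto)
  moreover have "(\<forall>e\<in>E. a \<in> e \<longrightarrow> ({c, d}, e) \<in> rank_edge_order f E) \<or>
                 (\<forall>e\<in>E. b \<in> e \<longrightarrow> ({c, d}, e) \<in> rank_edge_order f E)"
    if ab: "{a, b} \<in> E" and cd: "{c, d} \<in> E" and "{a, b} \<inter> {c, d} = {}"
      and "({c, d}, {a, b}) \<in> rank_edge_order f E" for a b c d
  proof -
    have less: "min_rank f {a, b} < min_rank f {c, d}"
      using that assms(2) edge[OF ab] edge[OF cd] by (intro min_rank_less_if_disjoint_larger) auto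
    obtain x where x: "x \<in> {a, b}" "min_rank f {a, b} = f x"
      using edge(3,4)[OF ab] by (rule min_rank_attained)
    have "({c, d}, e) \<in> rank_edge_order f E" if "e \<in> E" "x \<in> e" for e
      using min_rank_le[OF edge(3)[OF \<open>e \<in> E\<close>] \<open>x \<in> e\<close>, of f] less x cd \<open>e \<in> E\<close>
      unfolding rank_edge_order_def by auto
    then show ?thesis
      using x by auto
  qed
  ultimately show ?thesis
    unfolding admissible_edge_ordering_def rank_edge_order_def by blast
qed

theorem lemma6p2:
  fixes V :: "'a set" and E :: "'a set set"
  assumes "simple_graph V E"
  shows "\<exists>r. admissible_edge_ordering E r"
proof -
  obtain f :: "'a \<Rightarrow> nat" where "inj_on f V"
    using assms finite_imp_inj_to_nat_seg unfolding simple_graph_def by metis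
  then show ?thesis
    using admissible_rank_edge_order[OF assms] by blast
qed

end
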